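(* Let $n\ge 3$, let $a_0,\ldots,a_{n-1}$ be indeterminates over $\mathbb{Q}$, and let $f=x^n+a_{n-1}x^{n-1}+\cdots+a_0$ with roots $r_1,\ldots,r_n$ in an algebraic closure of $\mathbb{Q}(a_0,\ldots,a_{n-1})$. Let $D_2\in\mathbb{Q}[a_0,\ldots,a_{n-1}]$ be the polynomial obtained by expressing the symmetric polynomial $\prod_{1\le i,j,k\le n,\ i<j,\ j\ne k,\ k\ne i}(2r_k-r_i-r_j)$ in terms of the coefficients via Vieta's formulas $a_{n-i}=(-1)^i s_i$ ($s_i$ the $i$th elementary symmetric polynomial of $r_1,\ldots,r_n$). Then $D_2$ is irreducible over $\mathbb{Q}$. *)

theory Defs
  imports Complex_Main "HOL-Library.Poly_Mapping" "HOL-Computational_Algebra.Factorial_Ring"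
begin

(* Multivariate polynomials over a ring 'a in countably many variables indexed by nat:
  a polynomial is a finitely supported map from monomials (exponent vectors nat =>0 nat)
  to coefficients; the ring structure is the convolution product from HOL-Library.Poly_Mapping. *)

type_synonym 'a mpoly = "(nat \<Rightarrow>\<^sub>0 nat) \<Rightarrow>\<^sub>0 'a"

definition mconst :: "'a::zero \<Rightarrow> 'a mpoly" where
  "mconst c = Poly_Mapping.single 0 c"

definition mvar :: "nat \<Rightarrow> 'a::{zero,one} mpoly" where
  "mvar i = Poly_Mapping.single (Poly_Mapping.single i 1) 1"

definition mvars :: "'a::zero mpoly \<Rightarrow> nat set" where
  "mvars p = (\<Union>m\<in>Poly_Mapping.keys p. Poly_Mapping.keys m)"

definition msubst :: "'a::comm_ring_1 mpoly \<Rightarrow> (nat \<Rightarrow> 'a mpoly) \<Rightarrow> 'a mpoly" where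
  "msubst p v = (\<Sum>m\<in>Poly_Mapping.keys p.
      mconst (Poly_Mapping.lookup p m) * (\<Prod>i\<in>Poly_Mapping.keys m. v i ^ Poly_Mapping.lookup m i))"

(* i-th elementary symmetric polynomial in the variables r_0,...,r_{n-1}
  (variables 0..n-1 play the roles of the roots r_1,...,r_n). *)
definition esym :: "nat \<Rightarrow> nat \<Rightarrow> rat mpoly" where
  "esym n i = (\<Sum>S\<in>{S. S \<subseteq> {0..<n} \<and> card S = i}. \<Prod>j\<in>S. mvar j)"

definition D2_roots :: "nat \<Rightarrow> rat mpoly" where
  "D2_roots n = (\<Prod>(i,j,k)\<in>{(i,j,k). i < j \<and> j < n \<and> k < n \<and> k \<noteq> i \<and> k \<noteq> j}.
      2 * mvar k - mvar i - mvar j)"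

(* Vieta substitution a_m := (-1)^(n-m) s_(n-m) for m < n
  (variables 0..n-1 play the roles of the coefficients a_0,...,a_{n-1}). *)
definition vieta :: "nat \<Rightarrow> nat \<Rightarrow> rat mpoly" where
  "vieta n m = (-1) ^ (n - m) * esym n (n - m)"

definition D2 :: "nat \<Rightarrow> rat mpoly" where
  "D2 n = (THE P. mvars P \<subseteq> {0..<n} \<and> msubst P (vieta n) = D2_roots n)"

end

(* Under the Vieta substitution a_{n-i} := (-1)^i s_i, which is injective on polynomials in
   a_0, ..., a_{n-1}, the polynomial D_2 becomes the product of the linear forms 2 r_k - r_i - r_j.
   Each of these is prime (a linear change of variables turns it into r_k), no two are associated,
   and the symmetric group permutes them transitively. A factorization D_2 = a b involves only the
   variables a_0, ..., a_{n-1} and is carried to a factorization of the product into two symmetric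
   polynomials. Whichever factor contains the form 2 r_2 - r_0 - r_1 then contains all its
   conjugates, hence the whole product, so the other factor is a constant and so is the
   corresponding factor of D_2. That D_2 exists at all is the existence half of the fundamental
   theorem of symmetric polynomials, by the usual reduction of leading monomials. *)

theory Submission
  imports Defs "HOL-Combinatorics.Permutations"
begin

abbreviation lookup :: "('a \<Rightarrow>\<^sub>0 'b::zero) \<Rightarrow> 'a \<Rightarrow> 'b" where
  "lookup \<equiv> Poly_Mapping.lookup"

abbreviation keys :: "('a \<Rightarrow>\<^sub>0 'b::zero) \<Rightarrow> 'a set" where
  "keys \<equiv> Poly_Mapping.keys"

abbreviation single :: "'a \<Rightarrow> 'b::zero \<Rightarrow> 'a \<Rightarrow>\<^sub>0 'b" where
  "single \<equiv> Poly_Mapping.single"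

lemma poly_mapping_sum_single: "p = (\<Sum>m\<in>keys p. single m (lookup p m))"
  by (rule poly_mapping_eqI) (simp add: lookup_sum lookup_single when_def in_keys_iff)

lemma mult_eq_sum_single:
  "p * q = (\<Sum>a\<in>keys p. \<Sum>b\<in>keys q. single (a + b) (lookup p a * lookup q b))"
proof -
  have "p * q = (\<Sum>a\<in>keys p. single a (lookup p a)) * (\<Sum>b\<in>keys q. single b (lookup q b))"
    by (simp flip: poly_mapping_sum_single)
  then show ?thesis
    by (simp add: sum_distrib_left sum_distrib_right mult_single sum.swap[of _ "keys q"])
qed

lemma lookup_mult_keys:
  "lookup (p * q) u = (\<Sum>a\<in>keys p. \<Sum>b\<in>keys q. if a + b = u then lookup p a * lookup q b else 0)"
  by (subst mult_eq_sum_single) (simp add: lookup_sum lookup_single when_def)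

lemma mvars_subset_iff: "mvars p \<subseteq> A \<longleftrightarrow> (\<forall>m\<in>keys p. keys m \<subseteq> A)"
  by (auto simp: mvars_def)

lemma mvars_mult: "mvars (p * q) \<subseteq> mvars p \<union> mvars q"
proof -
  have "keys m \<subseteq> mvars p \<union> mvars q" if m: "m \<in> keys (p * q)" for m
  proof -
    obtain a b where "a \<in> keys p" "b \<in> keys q" "m = a + b" using m keys_mult[of p q] by blast
    then show ?thesis using keys_add[of a b] by (auto simp: mvars_def)
  qed
  then show ?thesis by (auto simp: mvars_def)
qed

lemma mvars_prod: "mvars (\<Prod>i\<in>I. f i) \<subseteq> (\<Union>i\<in>I. mvars (f i))"
proof (induction I rule: infinite_finite_induct)
  case (insert x F)
  then show ?case using mvars_mult[of "f x" "prod f F"] by auto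
qed (simp_all add: mvars_def)

subsection \<open>Substitution\<close>

definition monom_eval :: "(nat \<Rightarrow> 'a::comm_ring_1 mpoly) \<Rightarrow> (nat \<Rightarrow>\<^sub>0 nat) \<Rightarrow> 'a mpoly" where
  "monom_eval v m = (\<Prod>i\<in>keys m. v i ^ lookup m i)"

lemma msubst_monom_eval: "msubst p v = (\<Sum>m\<in>keys p. mconst (lookup p m) * monom_eval v m)"
  by (simp add: msubst_def monom_eval_def)

lemma mconst_0 [simp]: "mconst 0 = 0"
  by (simp add: mconst_def)

lemma mconst_1 [simp]: "mconst 1 = 1"
  by (simp add: mconst_def)

lemma mconst_add: "mconst (a + b) = mconst a + mconst b"
  by (simp add: mconst_def single_add)

lemma mconst_mult: "mconst (a * b) = mconst a * mconst (b::'a::comm_ring_1)"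
  by (simp add: mconst_def mult_single)

lemma mconst_eq_0_iff [simp]: "mconst c = 0 \<longleftrightarrow> c = 0"
  by (metis lookup_single_eq lookup_zero single_zero mconst_def)

lemma mconst_neg_one_power: "((-1) ^ k :: 'a::comm_ring_1 mpoly) = mconst ((-1) ^ k)"
  by (induction k) (auto simp: mconst_mult mconst_def single_uminus)

lemma lookup_mconst_mult: "lookup (mconst c * p) u = c * lookup p u"
  by (simp add: mconst_def Poly_Mapping.map.rep_eq when_def flip: mult_map_scale_conv_mult)

lemma keys_mconst_mult: "keys (mconst c * p) \<subseteq> keys p"
  by (auto simp: in_keys_iff lookup_mconst_mult)

lemma lookup_mvar: "lookup (mvar i :: 'a::comm_ring_1 mpoly) u = (if u = single i 1 then 1 else 0)"
  by (simp add: mvar_def lookup_single when_def eq_commute)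

lemma mvar_power: "(mvar i :: 'a::comm_ring_1 mpoly) ^ e = single (single i e) 1"
  by (induction e) (auto simp: mvar_def mult_single single_add[symmetric] add.commute)

lemma prod_single_one: "(\<Prod>i\<in>K. single (f i) (1::'a::comm_ring_1)) = single (\<Sum>i\<in>K. f i) 1"
  by (induction K rule: infinite_finite_induct) (auto simp: mult_single)

lemma monom_eval_superset:
  "finite K \<Longrightarrow> keys m \<subseteq> K \<Longrightarrow> monom_eval v m = (\<Prod>i\<in>K. v i ^ lookup m i)"
  unfolding monom_eval_def by (rule prod.mono_neutral_left) (auto simp: in_keys_iff)

lemma monom_eval_0 [simp]: "monom_eval v 0 = 1"
  by (simp add: monom_eval_def)

lemma monom_eval_add: "monom_eval v (a + b) = monom_eval v a * monom_eval v b"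
proof -
  let ?K = "keys a \<union> keys b"
  have "monom_eval v (a + b) = (\<Prod>i\<in>?K. v i ^ lookup (a + b) i)"
    using keys_add[of a b] by (intro monom_eval_superset) auto
  also have "\<dots> = (\<Prod>i\<in>?K. v i ^ lookup a i) * (\<Prod>i\<in>?K. v i ^ lookup b i)"
    by (simp add: lookup_add power_add prod.distrib)
  also have "\<dots> = monom_eval v a * monom_eval v b"
    by (subst (1 2) monom_eval_superset[of ?K]) auto
  finally show ?thesis .
qed

lemma monom_eval_mvar: "monom_eval mvar m = (single m 1 :: 'a::comm_ring_1 mpoly)"
  by (simp add: monom_eval_def mvar_power prod_single_one flip: poly_mapping_sum_single)

lemma msubst_superset:
  "finite K \<Longrightarrow> keys p \<subseteq> K \<Longrightarrow> msubst p v = (\<Sum>m\<in>K. mconst (lookup p m) * monom_eval v m)"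
  unfolding msubst_monom_eval by (rule sum.mono_neutral_left) (auto simp: in_keys_iff)

lemma msubst_0 [simp]: "msubst 0 v = 0"
  by (simp add: msubst_def)

lemma msubst_single: "msubst (single m c) v = mconst c * monom_eval v m"
  by (simp add: msubst_monom_eval)

lemma msubst_mconst [simp]: "msubst (mconst c) v = mconst c"
  by (simp add: mconst_def msubst_single)

lemma msubst_1 [simp]: "msubst 1 v = 1"
  using msubst_mconst[of 1 v] by simp

lemma msubst_numeral [simp]: "msubst (numeral k) v = numeral k"
  using msubst_mconst[of "numeral k" v] by (simp add: mconst_def)

lemma msubst_mvar [simp]: "msubst (mvar i) v = v i"
  by (simp add: mvar_def msubst_single monom_eval_def)

lemma msubst_mvar_id [simp]: "msubst p mvar = p"
  by (simp add: msubst_monom_eval monom_eval_mvar mconst_def mult_single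
      flip: poly_mapping_sum_single)

lemma msubst_add: "msubst (p + q) v = msubst p v + msubst q v"
proof -
  let ?K = "keys p \<union> keys q"
  have "msubst (p + q) v = (\<Sum>m\<in>?K. mconst (lookup (p + q) m) * monom_eval v m)"
    using keys_add[of p q] by (intro msubst_superset) auto
  also have "\<dots> = (\<Sum>m\<in>?K. mconst (lookup p m) * monom_eval v m)
                 + (\<Sum>m\<in>?K. mconst (lookup q m) * monom_eval v m)"
    by (simp add: lookup_add mconst_add distrib_right sum.distrib)
  also have "\<dots> = msubst p v + msubst q v"
    by (subst (1 2) msubst_superset[of ?K]) auto
  finally show ?thesis .
qed

lemma msubst_sum: "msubst (\<Sum>i\<in>I. f i) v = (\<Sum>i\<in>I. msubst (f i) v)"
  by (induction I rule: infinite_finite_induct) (auto simp: msubst_add)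

lemma msubst_uminus: "msubst (- p) v = - msubst p v"
  using msubst_add[of p "-p" v] by (simp add: eq_neg_iff_add_eq_0 add.commute)

lemma msubst_diff: "msubst (p - q) v = msubst p v - msubst q v"
  using msubst_add[of p "-q" v] by (simp add: msubst_uminus)

lemma msubst_mult: "msubst (p * q) v = msubst p v * msubst q v"
proof -
  have "msubst (p * q) v = (\<Sum>a\<in>keys p. \<Sum>b\<in>keys q.
      mconst (lookup p a) * monom_eval v a * (mconst (lookup q b) * monom_eval v b))"
    by (subst mult_eq_sum_single)
       (simp add: msubst_sum msubst_single monom_eval_add mconst_mult ac_simps)
  also have "\<dots> = msubst p v * msubst q v"
    by (simp add: msubst_monom_eval sum_distrib_left sum_distrib_right sum.swap[of _ "keys q"])
  finally show ?thesis .
qed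

lemma msubst_dvd: "p dvd q \<Longrightarrow> msubst p v dvd msubst q v"
  by (auto simp: msubst_mult elim!: dvdE)

lemma msubst_power: "msubst (p ^ k) v = msubst p v ^ k"
  by (induction k) (auto simp: msubst_mult)

lemma msubst_prod: "msubst (\<Prod>i\<in>I. f i) v = (\<Prod>i\<in>I. msubst (f i) v)"
  by (induction I rule: infinite_finite_induct) (auto simp: msubst_mult)

lemma msubst_monom_eval_comp: "msubst (monom_eval w m) v = monom_eval (\<lambda>i. msubst (w i) v) m"
  by (simp add: monom_eval_def msubst_prod msubst_power)

lemma msubst_msubst: "msubst (msubst p w) v = msubst p (\<lambda>i. msubst (w i) v)"
  unfolding msubst_monom_eval[of p] by (simp add: msubst_sum msubst_mult msubst_monom_eval_comp)

lemma lookup_msubst: "lookup (msubst p v) u = (\<Sum>m\<in>keys p. lookup p m * lookup (monom_eval v m) u)"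
  by (simp add: msubst_monom_eval lookup_sum lookup_mconst_mult)

lemma msubst_mvar_zero_eq_sum:
  "msubst p (mvar(k := 0)) = (\<Sum>m\<in>{m\<in>keys p. k \<notin> keys m}. single m (lookup p m))"
proof -
  have "mconst (lookup p m) * monom_eval (mvar(k := 0)) m
          = (if k \<in> keys m then 0 else single m (lookup p m))" for m
  proof (cases "k \<in> keys m")
    case True
    then have "monom_eval (mvar(k := 0)) m = 0"
      unfolding monom_eval_def by (intro prod_zero) (auto simp: in_keys_iff zero_power)
    then show ?thesis using True by (metis mult_zero_right)
  next
    case False
    then have eq: "monom_eval (mvar(k := 0)) m = monom_eval mvar m"
      unfolding monom_eval_def by (intro prod.cong) auto
    show ?thesis unfolding eq using False by (simp add: monom_eval_mvar mconst_def mult_single)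
  qed
  then have "msubst p (mvar(k := 0)) = (\<Sum>m\<in>keys p. if k \<in> keys m then 0 else single m (lookup p m))"
    by (simp add: msubst_monom_eval)
  also have "\<dots> = (\<Sum>m\<in>{m\<in>keys p. k \<notin> keys m}. single m (lookup p m))"
    by (rule sum.mono_neutral_cong_right) auto
  finally show ?thesis .
qed

lemma mvar_dvd_if_msubst_zero:
  assumes "msubst p (mvar(k := 0)) = 0"
  shows "mvar k dvd p"
proof -
  have k_in: "k \<in> keys m" if "m \<in> keys p" for m
  proof (rule ccontr)
    assume "k \<notin> keys m"
    then have "lookup (msubst p (mvar(k := 0))) m = lookup p m"
      unfolding msubst_mvar_zero_eq_sum lookup_sum lookup_single using that
      by (simp add: when_def sum.delta)
    then show False using assms that by (simp add: in_keys_iff)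
  qed
  have "mvar k * (\<Sum>m\<in>keys p. single (m - single k 1) (lookup p m))
          = (\<Sum>m\<in>keys p. single (single k 1 + (m - single k 1)) (lookup p m))"
    by (simp add: mvar_def sum_distrib_left mult_single)
  also have "\<dots> = (\<Sum>m\<in>keys p. single m (lookup p m))"
  proof (intro sum.cong refl)
    fix m assume "m \<in> keys p"
    then have "lookup m k \<ge> 1" using k_in by (simp add: in_keys_iff Suc_le_eq)
    then have "single k 1 + (m - single k 1) = m"
      by (intro poly_mapping_eqI) (auto simp: lookup_add lookup_minus lookup_single when_def)
    then show "single (single k 1 + (m - single k 1)) (lookup p m) = single m (lookup p m)" by simp
  qed
  also have "\<dots> = p" by (rule poly_mapping_sum_single[symmetric])
  finally show ?thesis by (metis dvdI)
qed

lemma mvar_dvd_mult: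
  fixes p q :: "'a::idom mpoly"
  assumes "mvar k dvd p * q"
  shows "mvar k dvd p \<or> mvar k dvd q"
proof -
  obtain r where "p * q = mvar k * r" using assms by (auto elim: dvdE)
  then have "msubst p (mvar(k := 0)) * msubst q (mvar(k := 0)) = 0"
    by (simp flip: msubst_mult add: msubst_mult)
  then show ?thesis using mvar_dvd_if_msubst_zero by auto
qed

subsection \<open>Leading monomials\<close>

text \<open>Exponent vectors carry the lexicographic order of Poly_Mapping, in which the variable with
  the smallest index dominates; it is compatible with addition, so it is a monomial order.\<close>

definition lead_monom :: "'a::zero mpoly \<Rightarrow> (nat \<Rightarrow>\<^sub>0 nat)" where
  "lead_monom p = (if p = 0 then 0 else Max (keys p))"

lemma lead_monom_in_keys: "p \<noteq> 0 \<Longrightarrow> lead_monom p \<in> keys p"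
  unfolding lead_monom_def by (auto intro: Max_in)

lemma le_lead_monom: "m \<in> keys p \<Longrightarrow> m \<le> lead_monom p"
  unfolding lead_monom_def by (auto intro: Max_ge)

lemma lookup_greater_lead_monom: "lead_monom p < m \<Longrightarrow> lookup p m = 0"
  using le_lead_monom[of m p] by (auto simp: in_keys_iff dest: leD)

lemma lead_monom_eqI: "m \<in> keys p \<Longrightarrow> (\<And>m'. m' \<in> keys p \<Longrightarrow> m' \<le> m) \<Longrightarrow> lead_monom p = m"
  unfolding lead_monom_def by (auto intro: Max_eqI)

lemma lookup_lead_monom_0_pos:
  assumes "m \<in> keys p" "0 < lookup m 0"
  shows "0 < lookup (lead_monom p) 0"
proof (rule ccontr)
  assume "\<not> ?thesis"
  then have "lead_monom p < m"
    unfolding less_poly_mapping.rep_eq less_fun_def using assms(2) by (intro exI[of _ 0]) auto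
  then show False using le_lead_monom[OF assms(1)] by simp
qed

lemma lead_monom_mconst [simp]: "lead_monom (mconst c) = 0"
  by (simp add: lead_monom_def mconst_def)

lemma lead_monom_1 [simp]: "lead_monom 1 = 0"
  by (metis lead_monom_mconst mconst_1)

lemma monom_nonneg: "(0::nat \<Rightarrow>\<^sub>0 nat) \<le> m"
  using not_less[of m 0] by (simp add: less_poly_mapping.rep_eq less_fun_def)

lemma lead_monom_eq_0_imp_mconst: "lead_monom p = 0 \<Longrightarrow> p = mconst (lookup p 0)"
proof (rule poly_mapping_eqI)
  fix m assume "lead_monom p = 0"
  then have "m \<in> keys p \<Longrightarrow> m = 0" using le_lead_monom[of m p] monom_nonneg[of m] by auto
  then show "lookup p m = lookup (mconst (lookup p 0)) m"
    by (auto simp: mconst_def lookup_single when_def in_keys_iff)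
qed

lemma lookup_mult_lead_monoms:
  fixes p q :: "'a::idom mpoly"
  assumes "p \<noteq> 0" "q \<noteq> 0"
  shows "lookup (p * q) (lead_monom p + lead_monom q)
           = lookup p (lead_monom p) * lookup q (lead_monom q)"
proof -
  let ?u = "lead_monom p + lead_monom q"
  have lead_pair: "a + b = ?u \<longleftrightarrow> a = lead_monom p \<and> b = lead_monom q"
    if "a \<in> keys p" "b \<in> keys q" for a b
  proof -
    have a: "a \<le> lead_monom p" and b: "b \<le> lead_monom q"
      using that by (auto intro: le_lead_monom)
    have "a + b < ?u" if "a < lead_monom p"
      using add_strict_right_mono[OF that] add_left_mono[OF b] by (rule order.strict_trans2)
    moreover have "a + b < ?u" if "b < lead_monom q"
      using add_strict_left_mono[OF that] add_right_mono[OF a] by (rule order.strict_trans2)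
    ultimately show ?thesis using le_neq_trans[OF a] le_neq_trans[OF b] by (metis less_irrefl)
  qed
  have "lookup (p * q) ?u = (\<Sum>a\<in>keys p. \<Sum>b\<in>keys q.
      if a = lead_monom p \<and> b = lead_monom q then lookup p a * lookup q b else 0)"
    unfolding lookup_mult_keys by (intro sum.cong refl) (simp only: lead_pair)
  also have "\<dots> = (\<Sum>a\<in>keys p. if a = lead_monom p
                       then lookup p (lead_monom p) * lookup q (lead_monom q) else 0)"
    using lead_monom_in_keys[OF assms(2)] by (intro sum.cong refl) (auto simp: sum.delta' cong: if_cong)
  also have "\<dots> = lookup p (lead_monom p) * lookup q (lead_monom q)"
    using lead_monom_in_keys[OF assms(1)] by (simp add: sum.delta')
  finally show ?thesis .
qed

lemma lead_monom_mult:
  fixes p q :: "'a::idom mpoly"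
  assumes "p \<noteq> 0" "q \<noteq> 0"
  shows "lead_monom (p * q) = lead_monom p + lead_monom q"
proof (rule lead_monom_eqI)
  show "lead_monom p + lead_monom q \<in> keys (p * q)"
    using lookup_mult_lead_monoms[OF assms] lead_monom_in_keys[OF assms(1)]
      lead_monom_in_keys[OF assms(2)] by (simp add: in_keys_iff)
  fix m assume "m \<in> keys (p * q)"
  then obtain a b where "a \<in> keys p" "b \<in> keys q" "m = a + b"
    using keys_mult[of p q] by blast
  then show "m \<le> lead_monom p + lead_monom q" by (simp add: add_mono le_lead_monom)
qed

lemma lead_monom_prod:
  fixes f :: "'b \<Rightarrow> 'a::idom mpoly"
  assumes "finite I" "\<And>i. i \<in> I \<Longrightarrow> f i \<noteq> 0"
  shows "(\<Prod>i\<in>I. f i) \<noteq> 0 \<and> lead_monom (\<Prod>i\<in>I. f i) = (\<Sum>i\<in>I. lead_monom (f i)) \<and>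
    lookup (\<Prod>i\<in>I. f i) (\<Sum>i\<in>I. lead_monom (f i)) = (\<Prod>i\<in>I. lookup (f i) (lead_monom (f i)))"
  using assms
proof (induction I rule: finite_induct)
  case empty
  show ?case by simp
next
  case (insert x F)
  then have "f x \<noteq> 0" "prod f F \<noteq> 0" by auto
  with insert show ?case
    using lead_monom_mult[of "f x" "prod f F"] lookup_mult_lead_monoms[of "f x" "prod f F"] by simp
qed

lemma lead_monom_mconst_mult:
  fixes p :: "'a::idom mpoly"
  shows "c \<noteq> 0 \<Longrightarrow> p \<noteq> 0 \<Longrightarrow> lead_monom (mconst c * p) = lead_monom p"
  by (simp add: lead_monom_mult)

lemma mpoly_dvd_one_iff: "(p :: 'a::field mpoly) dvd 1 \<longleftrightarrow> (\<exists>c. c \<noteq> 0 \<and> p = mconst c)"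
proof
  assume "p dvd 1"
  then obtain q where q: "1 = p * q" by (auto elim: dvdE)
  then have "p \<noteq> 0" "q \<noteq> 0" by auto
  then have "lead_monom p + lead_monom q = 0"
    using lead_monom_mult[OF \<open>p \<noteq> 0\<close> \<open>q \<noteq> 0\<close>] q by simp
  then have "lead_monom p = 0"
    by (intro poly_mapping_eqI) (metis add_is_0 lookup_add lookup_zero)
  then have "p = mconst (lookup p 0)" by (rule lead_monom_eq_0_imp_mconst)
  with \<open>p \<noteq> 0\<close> show "\<exists>c. c \<noteq> 0 \<and> p = mconst c" by (metis mconst_eq_0_iff)
next
  assume "\<exists>c. c \<noteq> 0 \<and> p = mconst c"
  then obtain c where "c \<noteq> 0" "p = mconst c" by blast
  then have "1 = p * mconst (inverse c)" by (simp add: mconst_mult[symmetric])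
  then show "p dvd 1" by (rule dvdI)
qed

subsection \<open>Symmetric polynomials\<close>

definition rename_vars :: "(nat \<Rightarrow> nat) \<Rightarrow> 'a::comm_ring_1 mpoly \<Rightarrow> 'a mpoly" where
  "rename_vars \<sigma> p = msubst p (\<lambda>i. mvar (\<sigma> i))"

definition rename_monom :: "(nat \<Rightarrow> nat) \<Rightarrow> (nat \<Rightarrow>\<^sub>0 nat) \<Rightarrow> (nat \<Rightarrow>\<^sub>0 nat)" where
  "rename_monom \<sigma> m = (\<Sum>i\<in>keys m. single (\<sigma> i) (lookup m i))"

definition symmetric :: "nat \<Rightarrow> 'a::comm_ring_1 mpoly \<Rightarrow> bool" where
  "symmetric n p \<longleftrightarrow> (\<forall>\<sigma>. \<sigma> permutes {0..<n} \<longrightarrow> rename_vars \<sigma> p = p)"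

lemma rename_vars_mvar [simp]: "rename_vars \<sigma> (mvar i) = mvar (\<sigma> i)"
  by (simp add: rename_vars_def)

lemma rename_vars_numeral [simp]: "rename_vars \<sigma> (numeral c) = numeral c"
  by (simp add: rename_vars_def)

lemma rename_vars_diff: "rename_vars \<sigma> (p - q) = rename_vars \<sigma> p - rename_vars \<sigma> q"
  by (simp add: rename_vars_def msubst_diff)

lemma rename_vars_mult: "rename_vars \<sigma> (p * q) = rename_vars \<sigma> p * rename_vars \<sigma> q"
  by (simp add: rename_vars_def msubst_mult)

lemma rename_vars_prod: "rename_vars \<sigma> (\<Prod>i\<in>I. f i) = (\<Prod>i\<in>I. rename_vars \<sigma> (f i))"
  by (simp add: rename_vars_def msubst_prod)

lemma rename_vars_msubst: "rename_vars \<sigma> (msubst p v) = msubst p (\<lambda>i. rename_vars \<sigma> (v i))"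
  by (simp add: rename_vars_def msubst_msubst)

lemma rename_vars_eq_sum: "rename_vars \<sigma> p = (\<Sum>m\<in>keys p. single (rename_monom \<sigma> m) (lookup p m))"
proof -
  have "monom_eval (\<lambda>i. mvar (\<sigma> i)) m = (single (rename_monom \<sigma> m) 1 :: 'a mpoly)" for m
    by (simp add: monom_eval_def mvar_power prod_single_one rename_monom_def)
  then show ?thesis by (simp add: rename_vars_def msubst_monom_eval mconst_def mult_single)
qed

lemma lookup_rename_monom: "inj \<sigma> \<Longrightarrow> lookup (rename_monom \<sigma> m) (\<sigma> j) = lookup m j"
  by (simp add: rename_monom_def lookup_sum lookup_single when_def inj_eq sum.delta in_keys_iff
      cong: if_cong)

lemma lookup_rename_monom_transpose:
  "lookup (rename_monom (transpose a b) m) k = lookup m (transpose a b k)"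
  by (metis lookup_rename_monom inj_transpose transpose_involutory)

lemma lookup_rename_vars:
  assumes "inj \<sigma>" shows "lookup (rename_vars \<sigma> p) (rename_monom \<sigma> m) = lookup p m"
proof -
  have inj_rename: "rename_monom \<sigma> m' = rename_monom \<sigma> m \<longleftrightarrow> m' = m" for m'
    using lookup_rename_monom[OF assms] by (metis poly_mapping_eqI)
  have "lookup (rename_vars \<sigma> p) (rename_monom \<sigma> m)
          = (\<Sum>m'\<in>keys p. if m' = m then lookup p m' else 0)"
    unfolding rename_vars_eq_sum lookup_sum lookup_single when_def inj_rename by (rule refl)
  also have "\<dots> = lookup p m" by (simp add: sum.delta in_keys_iff)
  finally show ?thesis .
qed

lemma rename_monom_in_keys: "inj \<sigma> \<Longrightarrow> m \<in> keys p \<Longrightarrow> rename_monom \<sigma> m \<in> keys (rename_vars \<sigma> p)"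
  by (simp add: in_keys_iff lookup_rename_vars)

lemma keys_rename_vars: "keys (rename_vars \<sigma> p) \<subseteq> rename_monom \<sigma> ` keys p"
  using keys_sum[of "\<lambda>m. single (rename_monom \<sigma> m) (lookup p m)" "keys p"]
  by (auto simp: rename_vars_eq_sum split: if_splits)

text \<open>Swapping an outside variable \<open>x\<^sub>N\<close> of \<open>q\<close> with the lexicographically dominant \<open>x\<^sub>0\<close> puts
  \<open>x\<^sub>0\<close> into the leading monomial of the product, which \<open>p * q\<close> cannot produce.\<close>

lemma mvars_right_factor_subset:
  fixes p q :: "'a::idom mpoly"
  assumes vars: "mvars (p * q) \<subseteq> {0..<n}" and "p \<noteq> 0" "q \<noteq> 0" "0 < n"
  shows "mvars q \<subseteq> {0..<n}"
proof (rule ccontr)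
  assume "\<not> ?thesis"
  then obtain N where "N \<in> mvars q" "N \<ge> n" by (metis atLeastLessThan_iff leI subsetI zero_le)
  then obtain m where m: "m \<in> keys q" "N \<in> keys m" "N \<ge> n" by (auto simp: mvars_def)
  define \<tau> where "\<tau> = transpose 0 N"
  have "0 < lookup (lead_monom (rename_vars \<tau> q)) 0"
    using lookup_lead_monom_0_pos[OF rename_monom_in_keys[OF inj_transpose m(1)]] m(2)
    by (simp add: \<tau>_def lookup_rename_monom_transpose in_keys_iff)
  moreover have "rename_vars \<tau> p \<noteq> 0" "rename_vars \<tau> q \<noteq> 0"
    using rename_monom_in_keys[OF inj_transpose] \<open>p \<noteq> 0\<close> \<open>q \<noteq> 0\<close> unfolding \<tau>_def
    by (metis all_not_in_conv keys_eq_empty keys_zero)+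
  ultimately have pos: "0 < lookup (lead_monom (rename_vars \<tau> (p * q))) 0"
    by (simp add: rename_vars_mult lead_monom_mult lookup_add)
  then have "rename_vars \<tau> (p * q) \<noteq> 0" by (auto simp: lead_monom_def)
  then obtain m' where "m' \<in> keys (p * q)" "lead_monom (rename_vars \<tau> (p * q)) = rename_monom \<tau> m'"
    using lead_monom_in_keys keys_rename_vars by blast
  moreover from this have "N \<notin> keys m'" using vars m(3) by (auto simp: mvars_def)
  ultimately show False
    using pos by (simp add: \<tau>_def lookup_rename_monom_transpose in_keys_iff)
qed

lemma symmetric_diff: "symmetric n p \<Longrightarrow> symmetric n q \<Longrightarrow> symmetric n (p - q)"
  by (simp add: symmetric_def rename_vars_diff)

text \<open>Otherwise swapping the two adjacent variables would produce a larger monomial of \<open>p\<close>.\<close>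

lemma lead_monom_symmetric_antimono:
  assumes "symmetric n p" "Suc j < n"
  shows "lookup (lead_monom p) (Suc j) \<le> lookup (lead_monom p) j"
proof (rule ccontr)
  assume less: "\<not> ?thesis"
  then have "p \<noteq> 0" by (auto simp: lead_monom_def)
  let ?\<tau> = "transpose j (Suc j)" and ?\<mu> = "lead_monom p"
  have "rename_vars ?\<tau> p = p"
    using assms by (simp add: symmetric_def permutes_swap_id)
  then have "rename_monom ?\<tau> ?\<mu> \<in> keys p"
    using rename_monom_in_keys[OF inj_transpose lead_monom_in_keys[OF \<open>p \<noteq> 0\<close>]] by metis
  then have "rename_monom ?\<tau> ?\<mu> \<le> ?\<mu>" by (rule le_lead_monom)
  moreover have "?\<mu> < rename_monom ?\<tau> ?\<mu>"
    unfolding less_poly_mapping.rep_eq less_fun_def using less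
    by (intro exI[of _ j]) (auto simp: lookup_rename_monom_transpose transpose_def)
  ultimately show False by simp
qed

lemma permutes_map_distinct:
  assumes "distinct xs" "distinct ys" "length xs = length ys" "set xs \<subseteq> A" "set ys \<subseteq> A"
  shows "\<exists>\<sigma>. \<sigma> permutes A \<and> map \<sigma> xs = ys"
  using assms
proof (induction xs arbitrary: ys)
  case Nil
  then show ?case using permutes_id by fastforce
next
  case (Cons x xs)
  then obtain y ys' where ys: "ys = y # ys'" by (cases ys) auto
  with Cons obtain \<sigma> where \<sigma>: "\<sigma> permutes A" "map \<sigma> xs = ys'" by auto
  have "\<sigma> z \<noteq> \<sigma> x" "\<sigma> z \<noteq> y" if "z \<in> set xs" for z
    using Cons.prems(1,2) that ys \<sigma>(2) permutes_inj[OF \<sigma>(1)] by (auto simp: inj_eq)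
  then have "map (transpose (\<sigma> x) y \<circ> \<sigma>) (x # xs) = ys"
    using \<sigma>(2) ys by (auto intro!: map_idI transpose_apply_other)
  moreover have "transpose (\<sigma> x) y \<circ> \<sigma> permutes A"
    using Cons.prems(4,5) ys permutes_in_image[OF \<sigma>(1)]
    by (intro permutes_compose[OF \<sigma>(1)] permutes_swap_id) auto
  ultimately show ?case by blast
qed

lemma permutes_image_subsets_card:
  assumes "\<sigma> permutes A"
  shows "bij_betw ((`) \<sigma>) {S. S \<subseteq> A \<and> card S = k} {S. S \<subseteq> A \<and> card S = k}"
proof (rule bij_betw_imageI)
  have inj: "inj \<sigma>" using assms by (rule permutes_inj)
  then show "inj_on ((`) \<sigma>) {S. S \<subseteq> A \<and> card S = k}"
    by (meson inj_image_eq_iff inj_onI)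
  have "S \<in> (`) \<sigma> ` {S. S \<subseteq> A \<and> card S = k}" if "S \<subseteq> A" "card S = k" for S
  proof
    show "S = \<sigma> ` (inv \<sigma> ` S)" by (simp add: image_comp permutes_inv_o[OF assms])
    have "inj_on (inv \<sigma>) S"
      using permutes_inj[OF permutes_inv[OF assms]] by (rule inj_on_subset) simp
    then show "inv \<sigma> ` S \<in> {S. S \<subseteq> A \<and> card S = k}"
      using that permutes_image[OF permutes_inv[OF assms]] by (auto simp: card_image)
  qed
  moreover have "\<sigma> ` S \<in> {S. S \<subseteq> A \<and> card S = k}" if "S \<subseteq> A" "card S = k" for S
    using that permutes_image[OF assms] inj by (auto simp: card_image inj_on_subset)
  ultimately show "(`) \<sigma> ` {S. S \<subseteq> A \<and> card S = k} = {S. S \<subseteq> A \<and> card S = k}"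
    by blast
qed

lemma symmetric_esym: "symmetric n (esym n k)"
  unfolding symmetric_def
proof (intro allI impI)
  fix \<sigma> assume \<sigma>: "\<sigma> permutes {0..<n}"
  let ?A = "{S. S \<subseteq> {0..<n} \<and> card S = k}"
  have "rename_vars \<sigma> (esym n k) = (\<Sum>S\<in>?A. \<Prod>j\<in>\<sigma> ` S. mvar j)"
    using permutes_inj[OF \<sigma>]
    by (simp add: esym_def rename_vars_def msubst_sum msubst_prod prod.reindex inj_on_subset)
  also have "\<dots> = esym n k"
    unfolding esym_def by (rule sum.reindex_bij_betw[OF permutes_image_subsets_card[OF \<sigma>]])
  finally show "rename_vars \<sigma> (esym n k) = esym n k" .
qed

lemma symmetric_msubst_vieta: "symmetric n (msubst p (vieta n))"
proof -
  have "rename_vars \<sigma> (vieta n i) = vieta n i" if "\<sigma> permutes {0..<n}" for \<sigma> i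
    using symmetric_esym[of n "n - i"] that
    by (simp add: vieta_def rename_vars_mult mconst_neg_one_power symmetric_def)
       (simp add: rename_vars_def)
  then show ?thesis by (simp add: symmetric_def rename_vars_msubst)
qed

definition monom_of_set :: "nat set \<Rightarrow> (nat \<Rightarrow>\<^sub>0 nat)" where
  "monom_of_set S = (\<Sum>j\<in>S. single j 1)"

lemma lookup_monom_of_set: "finite S \<Longrightarrow> lookup (monom_of_set S) j = (if j \<in> S then 1 else 0)"
  by (simp add: monom_of_set_def lookup_sum lookup_single when_def)

lemma keys_monom_of_set: "finite S \<Longrightarrow> keys (monom_of_set S) = S"
  by (auto simp: in_keys_iff lookup_monom_of_set split: if_splits)

lemma monom_of_set_inject: "finite S \<Longrightarrow> finite T \<Longrightarrow> monom_of_set S = monom_of_set T \<longleftrightarrow> S = T"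
  by (metis keys_monom_of_set)

lemma esym_eq_sum_monoms:
  "esym n k = (\<Sum>S\<in>{S. S \<subseteq> {0..<n} \<and> card S = k}. single (monom_of_set S) 1)"
  unfolding esym_def mvar_def monom_of_set_def by (intro sum.cong refl prod_single_one)

lemma lookup_esym:
  assumes "S \<subseteq> {0..<n}" "card S = k"
  shows "lookup (esym n k) (monom_of_set S) = 1"
proof -
  let ?A = "{S. S \<subseteq> {0..<n} \<and> card S = k}"
  have "finite ?A" by (rule finite_subset[of _ "Pow {0..<n}"]) auto
  have "lookup (esym n k) (monom_of_set S) = (\<Sum>T\<in>?A. if T = S then 1 else 0)"
    unfolding esym_eq_sum_monoms lookup_sum lookup_single when_def
    using assms finite_subset[of _ "{0..<n}"] by (intro sum.cong refl) (auto simp: monom_of_set_inject)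
  also have "\<dots> = 1" using assms \<open>finite ?A\<close> by (simp add: sum.delta)
  finally show ?thesis .
qed

lemma keys_esym: "keys (esym n k) \<subseteq> monom_of_set ` {S. S \<subseteq> {0..<n} \<and> card S = k}"
  unfolding esym_eq_sum_monoms using keys_sum by fastforce

lemma monom_of_set_le_initial:
  assumes S: "S \<subseteq> {0..<n}" "card S = k"
  shows "monom_of_set S \<le> monom_of_set {0..<k}"
proof (cases "S = {0..<k}")
  case False
  have "finite S" using S by (auto intro: finite_subset)
  then have "\<not> {0..<k} \<subseteq> S" using S False by (metis card_atLeastLessThan card_subset_eq diff_zero)
  then obtain j0 where "j0 \<in> {0..<k} - S" by blast
  define j where "j = (LEAST j. j \<in> {0..<k} - S)"
  have j: "j \<in> {0..<k} - S" unfolding j_def by (rule LeastI) fact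
  have "j' \<in> S" if "j' < j" for j'
    using that j not_less_Least[of j' "\<lambda>j. j \<in> {0..<k} - S"] unfolding j_def by auto
  then have "monom_of_set S < monom_of_set {0..<k}"
    unfolding less_poly_mapping.rep_eq less_fun_def
    using j \<open>finite S\<close> by (intro exI[of _ j]) (auto simp: lookup_monom_of_set)
  then show ?thesis by simp
qed simp

lemma lead_monom_esym:
  assumes "k \<le> n"
  shows "lead_monom (esym n k) = monom_of_set {0..<k}"
proof (rule lead_monom_eqI)
  show "monom_of_set {0..<k} \<in> keys (esym n k)"
    using lookup_esym[of "{0..<k}" n k] assms by (simp add: in_keys_iff)
  show "m \<le> monom_of_set {0..<k}" if "m \<in> keys (esym n k)" for m
    using that keys_esym monom_of_set_le_initial by blast
qed

lemma lead_monom_vieta: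
  assumes "i < n"
  shows "vieta n i \<noteq> 0" "lead_monom (vieta n i) = monom_of_set {0..<n - i}"
    "lookup (vieta n i) (monom_of_set {0..<n - i}) = (-1) ^ (n - i)"
proof -
  have "lookup (esym n (n - i)) (monom_of_set {0..<n - i}) = 1"
    by (rule lookup_esym) auto
  then have "esym n (n - i) \<noteq> 0" by auto
  then show "vieta n i \<noteq> 0" "lead_monom (vieta n i) = monom_of_set {0..<n - i}"
    "lookup (vieta n i) (monom_of_set {0..<n - i}) = (-1) ^ (n - i)"
    using \<open>lookup _ _ = 1\<close> lead_monom_esym[of "n - i" n]
    by (auto simp: vieta_def mconst_neg_one_power lookup_mconst_mult lead_monom_mconst_mult)
qed

subsection \<open>The Vieta substitution\<close>

text \<open>The leading monomial of the image of the monomial \<open>m\<close> under the Vieta substitution.\<close>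

definition vieta_exponent :: "nat \<Rightarrow> (nat \<Rightarrow>\<^sub>0 nat) \<Rightarrow> (nat \<Rightarrow>\<^sub>0 nat)" where
  "vieta_exponent n m = (\<Sum>i\<in>keys m. \<Sum>_<lookup m i. monom_of_set {0..<n - i})"

lemma monom_eval_eq_prod: "monom_eval v m = (\<Prod>i\<in>keys m. \<Prod>_<lookup m i. v i)"
  by (simp add: monom_eval_def)

lemma lead_monom_monom_eval_vieta:
  assumes "keys m \<subseteq> {0..<n}"
  shows "monom_eval (vieta n) m \<noteq> 0" "lead_monom (monom_eval (vieta n) m) = vieta_exponent n m"
    "lookup (monom_eval (vieta n) m) (vieta_exponent n m) \<noteq> 0"
proof -
  have "(\<Prod>_<lookup m i. vieta n i) \<noteq> 0 \<and>
      lead_monom (\<Prod>_<lookup m i. vieta n i) = (\<Sum>_<lookup m i. monom_of_set {0..<n - i}) \<and>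
      lookup (\<Prod>_<lookup m i. vieta n i) (\<Sum>_<lookup m i. monom_of_set {0..<n - i}) \<noteq> 0"
    if "i \<in> keys m" for i
    using lead_monom_prod[of "{..<lookup m i}" "\<lambda>_. vieta n i"] lead_monom_vieta[of i n] that assms
    by auto
  then show "monom_eval (vieta n) m \<noteq> 0" "lead_monom (monom_eval (vieta n) m) = vieta_exponent n m"
    "lookup (monom_eval (vieta n) m) (vieta_exponent n m) \<noteq> 0"
    unfolding monom_eval_eq_prod vieta_exponent_def
    using lead_monom_prod[of "keys m" "\<lambda>i. \<Prod>_<lookup m i. vieta n i"]
    by (simp_all add: prod_zero_iff cong: sum.cong)
qed

lemma lookup_vieta_exponent:
  assumes "keys m \<subseteq> {0..<n}"
  shows "lookup (vieta_exponent n m) j = (\<Sum>i<n - j. lookup m i)"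
proof -
  have "lookup (vieta_exponent n m) j = (\<Sum>i\<in>keys m. if j < n - i then lookup m i else 0)"
    unfolding vieta_exponent_def lookup_sum by (auto simp: lookup_monom_of_set intro!: sum.cong)
  also have "\<dots> = (\<Sum>i<n. if j < n - i then lookup m i else 0)"
    using assms by (intro sum.mono_neutral_left) (auto simp: in_keys_iff)
  also have "\<dots> = (\<Sum>i<n - j. lookup m i)"
    by (rule sum.mono_neutral_cong_right) auto
  finally show ?thesis .
qed

lemma vieta_exponent_inj:
  assumes "keys m \<subseteq> {0..<n}" "keys m' \<subseteq> {0..<n}" "vieta_exponent n m = vieta_exponent n m'"
  shows "m = m'"
proof (rule poly_mapping_eqI)
  fix i
  show "lookup m i = lookup m' i"
  proof (cases "i < n")
    case True
    have "(\<Sum>i'<Suc i. lookup m i') = (\<Sum>i'<Suc i. lookup m' i')"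
      using lookup_vieta_exponent[OF assms(1), of "n - Suc i"]
        lookup_vieta_exponent[OF assms(2), of "n - Suc i"] assms(3) True
      by (simp add: Suc_diff_Suc)
    moreover have "(\<Sum>i'<i. lookup m i') = (\<Sum>i'<i. lookup m' i')"
      using lookup_vieta_exponent[OF assms(1), of "n - i"]
        lookup_vieta_exponent[OF assms(2), of "n - i"] assms(3) True
      by simp
    ultimately show ?thesis by simp
  next
    case False
    then have "i \<notin> keys m" "i \<notin> keys m'" using assms by auto
    then show ?thesis by (simp add: in_keys_iff)
  qed
qed

text \<open>The exponents \<open>vieta_exponent n m\<close> of distinct monomials are distinct, so the largest of
  them survives in the image.\<close>

lemma msubst_vieta_nonzero:
  assumes "p \<noteq> 0" "mvars p \<subseteq> {0..<n}"
  shows "msubst p (vieta n) \<noteq> 0"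
proof -
  have vars: "keys m \<subseteq> {0..<n}" if "m \<in> keys p" for m
    using assms(2) that by (auto simp: mvars_subset_iff)
  have fin: "finite (vieta_exponent n ` keys p)" "vieta_exponent n ` keys p \<noteq> {}"
    using assms(1) by auto
  define u where "u = Max (vieta_exponent n ` keys p)"
  obtain m0 where m0: "m0 \<in> keys p" "vieta_exponent n m0 = u"
    using Max_in[OF fin] unfolding u_def by auto
  have "lookup (monom_eval (vieta n) m) u = 0" if "m \<in> keys p" "m \<noteq> m0" for m
  proof (rule lookup_greater_lead_monom)
    have "vieta_exponent n m \<le> u" unfolding u_def using fin that by auto
    moreover have "vieta_exponent n m \<noteq> u"
      using vieta_exponent_inj[OF vars vars] that m0 by metis
    ultimately show "lead_monom (monom_eval (vieta n) m) < u"
      using lead_monom_monom_eval_vieta(2)[OF vars[OF that(1)]] by simp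
  qed
  then have "lookup (msubst p (vieta n)) u = lookup p m0 * lookup (monom_eval (vieta n) m0) u"
    unfolding lookup_msubst using m0(1) by (simp add: sum.remove)
  also have "\<dots> \<noteq> 0"
    using lead_monom_monom_eval_vieta(3)[OF vars] m0 by (auto simp: in_keys_iff)
  finally show ?thesis by auto
qed

lemma msubst_vieta_inject:
  assumes "mvars p \<subseteq> {0..<n}" "mvars q \<subseteq> {0..<n}"
  shows "msubst p (vieta n) = msubst q (vieta n) \<longleftrightarrow> p = q"
proof
  assume eq: "msubst p (vieta n) = msubst q (vieta n)"
  have "mvars (p - q) \<subseteq> {0..<n}"
    using assms keys_diff[of p q] by (auto simp: mvars_subset_iff)
  then show "p = q"
    using msubst_vieta_nonzero[of "p - q" n] eq by (auto simp: msubst_diff)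
qed simp

definition bounded_monoms :: "nat \<Rightarrow> nat \<Rightarrow> (nat \<Rightarrow>\<^sub>0 nat) set" where
  "bounded_monoms n d = {\<nu>. keys \<nu> \<subseteq> {0..<n} \<and> (\<forall>j. lookup \<nu> j \<le> d)}"

lemma finite_bounded_monoms: "finite (bounded_monoms n d)"
proof -
  let ?g = "\<lambda>f. \<Sum>j<n. single j (f j)"
  have "bounded_monoms n d \<subseteq> ?g ` (PiE {..<n} (\<lambda>_. {..d}))"
  proof
    fix \<nu> assume \<nu>: "\<nu> \<in> bounded_monoms n d"
    have "\<nu> = ?g (restrict (lookup \<nu>) {..<n})"
      using \<nu> by (intro poly_mapping_eqI)
        (auto simp: lookup_sum lookup_single when_def bounded_monoms_def in_keys_iff restrict_def)
    moreover have "restrict (lookup \<nu>) {..<n} \<in> PiE {..<n} (\<lambda>_. {..d})"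
      using \<nu> by (auto simp: bounded_monoms_def)
    ultimately show "\<nu> \<in> ?g ` (PiE {..<n} (\<lambda>_. {..d}))" by blast
  qed
  then show ?thesis by (rule finite_subset) (intro finite_imageI finite_PiE; simp)
qed

lemma keys_mult_bounded_monoms:
  "keys p \<subseteq> bounded_monoms n d1 \<Longrightarrow> keys q \<subseteq> bounded_monoms n d2 \<Longrightarrow>
    keys (p * q) \<subseteq> bounded_monoms n (d1 + d2)"
proof
  fix \<nu> assume "\<nu> \<in> keys (p * q)" "keys p \<subseteq> bounded_monoms n d1" "keys q \<subseteq> bounded_monoms n d2"
  then obtain a b where "a \<in> bounded_monoms n d1" "b \<in> bounded_monoms n d2" "\<nu> = a + b"
    using keys_mult[of p q] by blast
  then show "\<nu> \<in> bounded_monoms n (d1 + d2)"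
    using keys_add[of a b] by (auto simp: bounded_monoms_def lookup_add add_mono)
qed

lemma keys_prod_bounded_monoms:
  "(\<And>i. i \<in> I \<Longrightarrow> keys (f i) \<subseteq> bounded_monoms n (d i)) \<Longrightarrow>
    keys (\<Prod>i\<in>I. f i) \<subseteq> bounded_monoms n (\<Sum>i\<in>I. d i)"
proof (induction I rule: infinite_finite_induct)
  case (insert x F)
  then show ?case by (simp add: keys_mult_bounded_monoms)
qed (auto simp: bounded_monoms_def)

lemma bounded_monoms_mono: "d \<le> d' \<Longrightarrow> bounded_monoms n d \<subseteq> bounded_monoms n d'"
  by (auto simp: bounded_monoms_def intro: le_trans)

lemma keys_monom_eval_vieta:
  "keys (monom_eval (vieta n) m) \<subseteq> bounded_monoms n (\<Sum>i\<in>keys m. lookup m i)"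
proof -
  have "keys (vieta n i) \<subseteq> bounded_monoms n 1" for i
  proof -
    have "keys (esym n (n - i)) \<subseteq> bounded_monoms n 1"
    proof
      fix \<nu> assume "\<nu> \<in> keys (esym n (n - i))"
      then obtain S where "S \<subseteq> {0..<n}" "\<nu> = monom_of_set S" using keys_esym by blast
      moreover from this have "finite S" by (auto intro: finite_subset)
      ultimately show "\<nu> \<in> bounded_monoms n 1"
        by (simp add: bounded_monoms_def keys_monom_of_set lookup_monom_of_set)
    qed
    then show ?thesis
      unfolding vieta_def mconst_neg_one_power using keys_mconst_mult by blast
  qed
  then have "keys (monom_eval (vieta n) m) \<subseteq> bounded_monoms n (\<Sum>i\<in>keys m. \<Sum>_<lookup m i. 1)"
    unfolding monom_eval_eq_prod by (intro keys_prod_bounded_monoms)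
  then show ?thesis by simp
qed

lemma sum_antimono_telescope:
  fixes \<mu> :: "nat \<Rightarrow> nat"
  assumes "\<mu> n = 0" "\<And>j. Suc j < n \<Longrightarrow> \<mu> (Suc j) \<le> \<mu> j" "k \<le> n"
  shows "(\<Sum>i<k. \<mu> (n - 1 - i) - \<mu> (n - i)) = \<mu> (n - k)"
  using assms(3)
proof (induction k)
  case (Suc k)
  have le: "\<mu> (n - k) \<le> \<mu> (n - Suc k)"
  proof (cases k)
    case (Suc k')
    then have "Suc (n - Suc k) = n - k" "n - k < n" using Suc.prems by auto
    then show ?thesis using assms(2)[of "n - Suc k"] by simp
  qed (simp add: assms(1))
  have "n - 1 - k = n - Suc k" by simp
  then show ?case using Suc le by simp
qed (simp add: assms(1))

lemma vieta_exponent_surj: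
  assumes keys: "keys \<mu> \<subseteq> {0..<n}" and mono: "\<And>j. Suc j < n \<Longrightarrow> lookup \<mu> (Suc j) \<le> lookup \<mu> j"
  obtains m where "keys m \<subseteq> {0..<n}" "vieta_exponent n m = \<mu>"
proof
  define m where "m = (\<Sum>i<n. single i (lookup \<mu> (n - 1 - i) - lookup \<mu> (n - i)))"
  have lookup_m: "lookup m i = (if i < n then lookup \<mu> (n - 1 - i) - lookup \<mu> (n - i) else 0)" for i
    by (simp add: m_def lookup_sum lookup_single when_def)
  show m_keys: "keys m \<subseteq> {0..<n}" by (auto simp: in_keys_iff lookup_m split: if_splits)
  have \<mu>_out: "lookup \<mu> j = 0" if "j \<ge> n" for j using keys that by (auto simp: in_keys_iff)
  show "vieta_exponent n m = \<mu>"
  proof (rule poly_mapping_eqI)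
    fix j
    show "lookup (vieta_exponent n m) j = lookup \<mu> j"
    proof (cases "j < n")
      case True
      have "lookup (vieta_exponent n m) j = (\<Sum>i<n - j. lookup \<mu> (n - 1 - i) - lookup \<mu> (n - i))"
        unfolding lookup_vieta_exponent[OF m_keys] by (intro sum.cong refl) (auto simp: lookup_m)
      also have "\<dots> = lookup \<mu> j"
        using sum_antimono_telescope[of "lookup \<mu>" n "n - j"] \<mu>_out mono True by simp
      finally show ?thesis .
    qed (simp add: lookup_vieta_exponent[OF m_keys] \<mu>_out)
  qed
qed

text \<open>Subtracting the image of a suitable multiple of one monomial kills the leading monomial.\<close>

lemma symmetric_reduction_step:
  assumes sym: "symmetric n F" and "F \<noteq> 0" and keys: "keys F \<subseteq> bounded_monoms n D"
  obtains G where "mvars G \<subseteq> {0..<n}" "symmetric n (F - msubst G (vieta n))"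
    "keys (F - msubst G (vieta n)) \<subseteq> bounded_monoms n D"
    "F - msubst G (vieta n) \<noteq> 0 \<Longrightarrow> lead_monom (F - msubst G (vieta n)) < lead_monom F"
proof -
  define \<mu> where "\<mu> = lead_monom F"
  have \<mu>_bounded: "\<mu> \<in> bounded_monoms n D"
    using lead_monom_in_keys[OF \<open>F \<noteq> 0\<close>] keys \<mu>_def by auto
  then have "keys \<mu> \<subseteq> {0..<n}" by (simp add: bounded_monoms_def)
  then obtain m where m_keys: "keys m \<subseteq> {0..<n}" and m: "vieta_exponent n m = \<mu>"
    using vieta_exponent_surj lead_monom_symmetric_antimono[OF sym, folded \<mu>_def] by metis
  define M where "M = monom_eval (vieta n) m"
  have M: "lead_monom M = \<mu>" "lookup M \<mu> \<noteq> 0"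
    using lead_monom_monom_eval_vieta[OF m_keys] m M_def by auto
  define c where "c = lookup F \<mu> / lookup M \<mu>"
  define F' where "F' = F - msubst (single m c) (vieta n)"
  have F'_keys: "keys F' \<subseteq> keys F \<union> keys M"
    using keys_diff[of F "mconst c * M"] keys_mconst_mult[of c M]
    by (auto simp: F'_def msubst_single M_def)
  have "(\<Sum>i\<in>keys m. lookup m i) = (\<Sum>i<n. lookup m i)"
    using m_keys by (intro sum.mono_neutral_left) (auto simp: in_keys_iff)
  also have "\<dots> = lookup \<mu> 0" by (metis lookup_vieta_exponent[OF m_keys, of 0] m diff_zero)
  also have "\<dots> \<le> D" using \<mu>_bounded by (auto simp: bounded_monoms_def)
  finally have "keys M \<subseteq> bounded_monoms n D"
    using keys_monom_eval_vieta[of n m] bounded_monoms_mono[of _ D n] unfolding M_def by blast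
  then have "keys F' \<subseteq> bounded_monoms n D" using F'_keys keys by blast
  moreover have "lead_monom F' < \<mu>" if "F' \<noteq> 0"
  proof -
    have "lead_monom F' \<le> \<mu>"
      using F'_keys lead_monom_in_keys[OF that] le_lead_monom[of "lead_monom F'" F]
        le_lead_monom[of "lead_monom F'" M] M(1) \<mu>_def by auto
    moreover have "lookup F' \<mu> = 0"
      using M by (simp add: F'_def msubst_single lookup_minus lookup_mconst_mult c_def M_def)
    then have "lead_monom F' \<noteq> \<mu>"
      using lead_monom_in_keys[OF that] by (auto simp: in_keys_iff)
    ultimately show ?thesis by simp
  qed
  moreover have "symmetric n F'"
    unfolding F'_def by (rule symmetric_diff[OF sym symmetric_msubst_vieta])
  moreover have "mvars (single m c) \<subseteq> {0..<n}" using m_keys by (simp add: mvars_subset_iff)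
  ultimately show ?thesis using that[of "single m c"] unfolding F'_def \<mu>_def by blast
qed

lemma symmetric_imp_vieta_image_bounded:
  assumes "symmetric n F" "keys F \<subseteq> bounded_monoms n D"
  shows "\<exists>P. mvars P \<subseteq> {0..<n} \<and> msubst P (vieta n) = F"
  using assms
proof (induction "card {\<nu>\<in>bounded_monoms n D. \<nu> \<le> lead_monom F}" arbitrary: F rule: less_induct)
  case less
  show ?case
  proof (cases "F = 0")
    case False
    obtain G where G: "mvars G \<subseteq> {0..<n}" "symmetric n (F - msubst G (vieta n))"
      "keys (F - msubst G (vieta n)) \<subseteq> bounded_monoms n D"
      "F - msubst G (vieta n) \<noteq> 0 \<Longrightarrow> lead_monom (F - msubst G (vieta n)) < lead_monom F"
      using symmetric_reduction_step[OF less.prems(1) False less.prems(2)] by blast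
    define F' where "F' = F - msubst G (vieta n)"
    obtain P' where P': "mvars P' \<subseteq> {0..<n}" "msubst P' (vieta n) = F'"
    proof (cases "F' = 0")
      case True
      then show ?thesis using that[of 0] by (simp add: mvars_def)
    next
      case False
      have F_bounded: "lead_monom F \<in> bounded_monoms n D"
        using lead_monom_in_keys[OF \<open>F \<noteq> 0\<close>] less.prems(2) by blast
      have less_F: "lead_monom F' < lead_monom F" using G(4) False unfolding F'_def by blast
      then have "\<nu> \<le> lead_monom F" if "\<nu> \<le> lead_monom F'" for \<nu>
        using that by (meson less_imp_le order_trans)
      moreover have "\<not> lead_monom F \<le> lead_monom F'" using less_F by (simp add: not_le)
      ultimately have "{\<nu>\<in>bounded_monoms n D. \<nu> \<le> lead_monom F'}
                         \<subset> {\<nu>\<in>bounded_monoms n D. \<nu> \<le> lead_monom F}"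
        using F_bounded by blast
      then have "card {\<nu>\<in>bounded_monoms n D. \<nu> \<le> lead_monom F'}
                   < card {\<nu>\<in>bounded_monoms n D. \<nu> \<le> lead_monom F}"
        by (rule psubset_card_mono[rotated]) (simp add: finite_bounded_monoms)
      then show ?thesis using less.hyps[OF _ G(2,3)] that unfolding F'_def by blast
    qed
    have "mvars (P' + G) \<subseteq> {0..<n}"
      using P'(1) G(1) keys_add[of P' G] by (auto simp: mvars_subset_iff)
    moreover have "msubst (P' + G) (vieta n) = F" using P'(2) by (simp add: msubst_add F'_def)
    ultimately show ?thesis by blast
  qed (rule exI[of _ 0], simp add: mvars_def)
qed

theorem symmetric_imp_vieta_image:
  assumes "symmetric n F" "mvars F \<subseteq> {0..<n}"
  obtains P where "mvars P \<subseteq> {0..<n}" "msubst P (vieta n) = F"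
proof -
  define D where "D = (\<Sum>m\<in>keys F. \<Sum>j\<in>keys m. lookup m j)"
  have "lookup m j \<le> D" if "m \<in> keys F" for m j
  proof (cases "j \<in> keys m")
    case True
    then have "lookup m j \<le> (\<Sum>j\<in>keys m. lookup m j)" by (simp add: member_le_sum)
    also have "\<dots> \<le> D" unfolding D_def using that by (rule member_le_sum) simp_all
    finally show ?thesis .
  qed (simp add: in_keys_iff)
  then have "keys F \<subseteq> bounded_monoms n D"
    using assms(2) by (auto simp: bounded_monoms_def mvars_subset_iff)
  then show ?thesis using symmetric_imp_vieta_image_bounded[OF assms(1)] that by blast
qed

subsection \<open>The linear factors of \<open>D2_roots\<close>\<close>

definition D2_index :: "nat \<Rightarrow> (nat \<times> nat \<times> nat) set" where
  "D2_index n = {(i, j, k). i < j \<and> j < n \<and> k < n \<and> k \<noteq> i \<and> k \<noteq> j}"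

definition D2_factor :: "nat \<times> nat \<times> nat \<Rightarrow> rat mpoly" where
  "D2_factor = (\<lambda>(i, j, k). 2 * mvar k - mvar i - mvar j)"

lemma finite_D2_index: "finite (D2_index n)"
  by (rule finite_subset[of _ "{..<n} \<times> {..<n} \<times> {..<n}"]) (auto simp: D2_index_def)

lemma D2_roots_eq_prod: "D2_roots n = (\<Prod>t\<in>D2_index n. D2_factor t)"
  unfolding D2_roots_def D2_index_def D2_factor_def by (rule refl)

text \<open>The substitution \<open>x\<^sub>k \<mapsto> (x\<^sub>k + x\<^sub>i + x\<^sub>j) / 2\<close> is an automorphism taking the factor
  to the prime \<open>x\<^sub>k\<close>.\<close>

lemma D2_factor_dvd_mult:
  assumes "i \<noteq> k" "j \<noteq> k" "D2_factor (i, j, k) dvd p * q"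
  shows "D2_factor (i, j, k) dvd p \<or> D2_factor (i, j, k) dvd q"
proof -
  let ?L = "D2_factor (i, j, k)"
  have half: "(2::rat mpoly) * mconst (1/2) = 1"
    by (simp add: mconst_def mult_single flip: single_numeral)
  define w where "w = (mvar :: nat \<Rightarrow> rat mpoly)(k := mconst (1/2) * (mvar k + mvar i + mvar j))"
  define w' where "w' = (mvar :: nat \<Rightarrow> rat mpoly)(k := ?L)"
  have "msubst ?L w = (2 * mconst (1/2)) * (mvar k + mvar i + mvar j) - mvar i - mvar j"
    using assms by (simp add: D2_factor_def w_def msubst_diff msubst_mult mult.assoc)
  then have L_w: "msubst ?L w = mvar k" by (simp add: half)
  have "msubst (w l) w' = mvar l" for l
  proof (cases "l = k")
    case True
    then have "msubst (w l) w' = mconst (1/2) * (2 * mvar k)"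
      using assms by (simp add: w_def w'_def msubst_mult msubst_add D2_factor_def)
    also have "\<dots> = (2 * mconst (1/2)) * mvar k" by (metis mult.assoc mult.commute)
    also have "\<dots> = mvar l" using True half by simp
    finally show ?thesis .
  qed (simp add: w_def w'_def)
  then have w_w': "msubst (msubst f w) w' = f" for f by (simp add: msubst_msubst)
  have "?L dvd f" if k_dvd: "mvar k dvd msubst f w" for f
  proof -
    obtain g where "msubst f w = mvar k * g" using k_dvd by (auto elim: dvdE)
    then have "f = ?L * msubst g w'" using w_w'[of f] by (simp add: msubst_mult w'_def)
    then show ?thesis by (rule dvdI)
  qed
  moreover obtain r where "p * q = ?L * r" using assms(3) by (auto elim: dvdE)
  then have "mvar k dvd msubst p w * msubst q w" by (metis dvdI msubst_mult L_w)
  ultimately show ?thesis using mvar_dvd_mult by blast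
qed

lemma single_one_eq_iff: "single a (1::nat) = single b 1 \<longleftrightarrow> a = b"
  by (metis lookup_single_eq lookup_single_not_eq one_neq_zero)

lemma lookup_D2_factor:
  "lookup (D2_factor (i, j, k)) u
     = 2 * lookup (mvar k) u - lookup (mvar i) u - (lookup (mvar j) u :: rat)"
proof -
  have two: "(2::rat mpoly) = mconst 2" by (simp add: mconst_def)
  show ?thesis unfolding D2_factor_def two by (simp add: lookup_minus lookup_mconst_mult)
qed

lemma lookup_D2_factor_single:
  assumes "(i, j, k) \<in> D2_index n"
  shows "lookup (D2_factor (i, j, k)) (single z 1)
           = (if z = k then 2 else if z = i \<or> z = j then -1 else 0)"
proof -
  have "i \<noteq> j" "k \<noteq> i" "k \<noteq> j" using assms by (auto simp: D2_index_def)
  then show ?thesis unfolding lookup_D2_factor lookup_mvar single_one_eq_iff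
    by (cases "z = k"; cases "z = i"; cases "z = j") simp_all
qed

lemma keys_D2_factor: "keys (D2_factor (i, j, k)) \<subseteq> {single i 1, single j 1, single k 1}"
  by (auto simp: in_keys_iff lookup_D2_factor lookup_mvar split: if_splits)

lemma D2_factor_nonzero: "t \<in> D2_index n \<Longrightarrow> D2_factor t \<noteq> 0"
  using lookup_D2_factor_single[of "fst t" "fst (snd t)" "snd (snd t)" n "snd (snd t)"]
  by (cases t) auto

lemma lead_monom_D2_factor:
  assumes "t \<in> D2_index n"
  obtains z where "lead_monom (D2_factor t) = single z 1"
proof -
  obtain i j k where "t = (i, j, k)" by (cases t)
  then have "lead_monom (D2_factor t) \<in> {single i 1, single j 1, single k 1}"
    using lead_monom_in_keys[OF D2_factor_nonzero[OF assms]] keys_D2_factor by blast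
  then show ?thesis using that by blast
qed

lemma D2_factor_not_unit:
  assumes "t \<in> D2_index n" shows "\<not> D2_factor t dvd 1"
proof
  assume "D2_factor t dvd 1"
  then obtain c where "D2_factor t = mconst c" by (auto simp: mpoly_dvd_one_iff)
  moreover obtain z where "lead_monom (D2_factor t) = single z 1"
    using lead_monom_D2_factor[OF assms] .
  ultimately have "single z (1::nat) = 0" by simp
  then show False by (metis lookup_single_eq lookup_zero one_neq_zero)
qed

text \<open>Both leading monomials have degree one, so the quotient has leading monomial \<open>0\<close>.\<close>

lemma D2_factor_dvd_imp_const_mult:
  assumes t: "t \<in> D2_index n" and s: "s \<in> D2_index n" and dvd: "D2_factor t dvd D2_factor s"
  obtains c where "c \<noteq> 0" "D2_factor s = mconst c * D2_factor t"
proof -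
  obtain C where C: "D2_factor s = D2_factor t * C" using dvd by (auto elim: dvdE)
  have "C \<noteq> 0" using C D2_factor_nonzero[OF s] by auto
  obtain x where x: "lead_monom (D2_factor t) = single x 1" using lead_monom_D2_factor[OF t] .
  obtain y where y: "lead_monom (D2_factor s) = single y 1" using lead_monom_D2_factor[OF s] .
  have lead: "single y 1 = single x 1 + lead_monom C"
    using lead_monom_mult[OF D2_factor_nonzero[OF t] \<open>C \<noteq> 0\<close>] C x y by simp
  have "lead_monom C = 0"
  proof (rule poly_mapping_eqI)
    fix z
    have "lookup (single y 1) z = lookup (single x 1) z + lookup (lead_monom C) z"
      "lookup (single y 1) x = lookup (single x 1) x + lookup (lead_monom C) x"
      using lead by (simp_all add: lookup_add)
    then show "lookup (lead_monom C) z = lookup 0 z"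
      by (cases "z = x"; cases "y = x") (auto simp: lookup_single when_def)
  qed
  then have "C = mconst (lookup C 0)" by (rule lead_monom_eq_0_imp_mconst)
  then show ?thesis using that[of "lookup C 0"] C \<open>C \<noteq> 0\<close> by (metis mconst_eq_0_iff mult.commute)
qed

text \<open>Comparing the coefficients \<open>2\<close> and \<open>-1\<close> shows that the constant is \<open>1\<close>.\<close>

lemma D2_factor_dvd_imp_eq:
  assumes t: "t \<in> D2_index n" and s: "s \<in> D2_index n" and dvd: "D2_factor t dvd D2_factor s"
  shows "t = s"
proof -
  obtain c where "c \<noteq> 0" and C: "D2_factor s = mconst c * D2_factor t"
    using D2_factor_dvd_imp_const_mult[OF assms] .
  obtain i j k where tt: "t = (i, j, k)" by (cases t)
  obtain i' j' k' where ss: "s = (i', j', k')" by (cases s)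
  have T: "i < j" "k \<noteq> i" "k \<noteq> j" and S: "i' < j'" "k' \<noteq> i'" "k' \<noteq> j'"
    using t s tt ss by (auto simp: D2_index_def)
  have coeff: "lookup (D2_factor (i', j', k')) (single z 1) = c * lookup (D2_factor (i, j, k)) (single z 1)"
    for z using C tt ss by (simp add: lookup_mconst_mult)
  note vs = lookup_D2_factor_single[OF s[unfolded ss]] and vt = lookup_D2_factor_single[OF t[unfolded tt]]
  have hk: "(if k = k' then 2 else if k = i' \<or> k = j' then -1 else 0) = 2 * c"
    and hi: "(if i = k' then 2 else if i = i' \<or> i = j' then -1 else 0) = - c"
    and hj: "(if j = k' then 2 else if j = i' \<or> j = j' then -1 else 0) = - c"
    using coeff[of k] coeff[of i] coeff[of j] vs vt T by auto
  have "2 * c = 2 \<or> 2 * c = -1" using hk \<open>c \<noteq> 0\<close> by (auto split: if_splits)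
  moreover have "- c = 2 \<or> - c = -1" using hi \<open>c \<noteq> 0\<close> by (auto split: if_splits)
  ultimately have "c = 1" by auto
  then have "k = k'" "i = i' \<or> i = j'" "j = i' \<or> j = j'"
    using hk hi hj by (auto split: if_splits)
  then show ?thesis using tt ss T S by auto
qed

definition permute_index :: "(nat \<Rightarrow> nat) \<Rightarrow> nat \<times> nat \<times> nat \<Rightarrow> nat \<times> nat \<times> nat" where
  "permute_index \<sigma> = (\<lambda>(i, j, k). (min (\<sigma> i) (\<sigma> j), max (\<sigma> i) (\<sigma> j), \<sigma> k))"

lemma rename_vars_D2_factor: "rename_vars \<sigma> (D2_factor t) = D2_factor (permute_index \<sigma> t)"
proof -
  obtain i j k where t: "t = (i, j, k)" by (cases t)
  have "rename_vars \<sigma> (D2_factor t) = 2 * mvar (\<sigma> k) - mvar (\<sigma> i) - mvar (\<sigma> j)"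
    by (simp add: t D2_factor_def rename_vars_diff rename_vars_mult)
  also have "\<dots> = D2_factor (permute_index \<sigma> t)"
    by (cases "\<sigma> i \<le> \<sigma> j") (simp_all add: t D2_factor_def permute_index_def min_def max_def)
  finally show ?thesis .
qed

lemma permute_index_in_D2_index:
  assumes \<sigma>: "\<sigma> permutes {0..<n}" and t: "(i, j, k) \<in> D2_index n"
  shows "permute_index \<sigma> (i, j, k) \<in> D2_index n"
proof -
  have "i < n" "j < n" "k < n" "i \<noteq> j" "k \<noteq> i" "k \<noteq> j" using t by (auto simp: D2_index_def)
  then have "\<sigma> i < n" "\<sigma> j < n" "\<sigma> k < n" "\<sigma> i \<noteq> \<sigma> j" "\<sigma> k \<noteq> \<sigma> i" "\<sigma> k \<noteq> \<sigma> j"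
    using permutes_in_image[OF \<sigma>] permutes_inj[OF \<sigma>] by (auto dest: injD)
  then show ?thesis by (simp add: D2_index_def permute_index_def min_def max_def)
qed

lemma permute_index_inv:
  assumes \<sigma>: "\<sigma> permutes A" and t: "(i, j, k) \<in> D2_index n"
  shows "permute_index (inv \<sigma>) (permute_index \<sigma> (i, j, k)) = (i, j, k)"
proof -
  have "i < j" using t by (simp add: D2_index_def)
  moreover have "\<sigma> i \<noteq> \<sigma> j" using \<open>i < j\<close> permutes_inj[OF \<sigma>] by (auto dest: injD)
  ultimately show ?thesis
    by (simp add: permute_index_def min_def max_def permutes_inverses[OF \<sigma>])
qed

lemma bij_betw_permute_index:
  assumes "\<sigma> permutes {0..<n}"
  shows "bij_betw (permute_index \<sigma>) (D2_index n) (D2_index n)"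
proof (rule bij_betw_byWitness[where f' = "permute_index (inv \<sigma>)"])
  have inv: "inv \<sigma> permutes {0..<n}" using assms by (rule permutes_inv)
  show "\<forall>t\<in>D2_index n. permute_index (inv \<sigma>) (permute_index \<sigma> t) = t"
    using permute_index_inv[OF assms] by (metis prod_cases3)
  show "\<forall>t\<in>D2_index n. permute_index \<sigma> (permute_index (inv \<sigma>) t) = t"
    using permute_index_inv[OF inv] permutes_inv_inv[OF assms] by (metis prod_cases3)
  show "permute_index \<sigma> ` D2_index n \<subseteq> D2_index n"
    using permute_index_in_D2_index[OF assms] by (metis image_subsetI prod_cases3)
  show "permute_index (inv \<sigma>) ` D2_index n \<subseteq> D2_index n"
    using permute_index_in_D2_index[OF inv] by (metis image_subsetI prod_cases3)
qed

lemma symmetric_D2_roots: "symmetric n (D2_roots n)"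
  unfolding symmetric_def D2_roots_eq_prod
proof (intro allI impI)
  fix \<sigma> assume \<sigma>: "\<sigma> permutes {0..<n}"
  have "rename_vars \<sigma> (\<Prod>t\<in>D2_index n. D2_factor t) = (\<Prod>t\<in>D2_index n. D2_factor (permute_index \<sigma> t))"
    by (simp add: rename_vars_prod rename_vars_D2_factor)
  also have "\<dots> = (\<Prod>t\<in>D2_index n. D2_factor t)"
    by (rule prod.reindex_bij_betw[OF bij_betw_permute_index[OF \<sigma>]])
  finally show "rename_vars \<sigma> (\<Prod>t\<in>D2_index n. D2_factor t) = (\<Prod>t\<in>D2_index n. D2_factor t)" .
qed

lemma D2_index_transitive:
  assumes "t \<in> D2_index n" "s \<in> D2_index n"
  obtains \<sigma> where "\<sigma> permutes {0..<n}" "permute_index \<sigma> t = s"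
proof -
  obtain i j k where t: "t = (i, j, k)" by (cases t)
  obtain i' j' k' where s: "s = (i', j', k')" by (cases s)
  obtain \<sigma> where "\<sigma> permutes {0..<n}" "map \<sigma> [i, j, k] = [i', j', k']"
    using permutes_map_distinct[of "[i, j, k]" "[i', j', k']" "{0..<n}"] assms t s
    by (auto simp: D2_index_def)
  then show ?thesis using that assms s t by (auto simp: permute_index_def D2_index_def)
qed

lemma D2_factor_dvd_prod_imp_mem:
  assumes "finite S" "S \<subseteq> D2_index n" "t \<in> D2_index n" "D2_factor t dvd (\<Prod>s\<in>S. D2_factor s)"
  shows "t \<in> S"
  using assms
proof (induction S rule: finite_induct)
  case empty
  then show ?case using D2_factor_not_unit by auto
next
  case (insert x S)
  obtain i j k where "t = (i, j, k)" by (cases t)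
  then have "D2_factor t dvd D2_factor x \<or> D2_factor t dvd (\<Prod>s\<in>S. D2_factor s)"
    using insert D2_factor_dvd_mult[of i k j] by (auto simp: D2_index_def)
  then show ?case using insert D2_factor_dvd_imp_eq by blast
qed

lemma prod_D2_factor_dvd:
  assumes "finite S" "S \<subseteq> D2_index n" "\<forall>t\<in>S. D2_factor t dvd p"
  shows "(\<Prod>t\<in>S. D2_factor t) dvd p"
  using assms
proof (induction S rule: finite_induct)
  case (insert x S)
  then obtain C where C: "p = (\<Prod>t\<in>S. D2_factor t) * C" by (auto elim: dvdE)
  obtain i j k where x: "x = (i, j, k)" by (cases x)
  have "D2_factor x dvd (\<Prod>t\<in>S. D2_factor t) * C" using insert C by simp
  moreover have "\<not> D2_factor x dvd (\<Prod>t\<in>S. D2_factor t)"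
    using D2_factor_dvd_prod_imp_mem[of S n x] insert by auto
  ultimately have "D2_factor x dvd C"
    using insert x D2_factor_dvd_mult[of i k j] by (auto simp: D2_index_def)
  then show ?case using C insert by (auto simp: mult_ac elim!: dvdE)
qed simp

lemma D2_roots_nonzero: "D2_roots n \<noteq> 0"
  unfolding D2_roots_eq_prod using D2_factor_nonzero finite_D2_index by auto

text \<open>A symmetric factor containing one linear factor contains all of them.\<close>

lemma symmetric_factor_of_D2_roots:
  assumes "p * q = D2_roots n" "symmetric n p" "t \<in> D2_index n" "D2_factor t dvd p"
  shows "q dvd 1"
proof -
  have "D2_factor s dvd p" if s: "s \<in> D2_index n" for s
  proof -
    obtain \<sigma> where \<sigma>: "\<sigma> permutes {0..<n}" "permute_index \<sigma> t = s"
      using D2_index_transitive[OF assms(3) s] .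
    obtain C where "p = D2_factor t * C" using assms(4) by (auto elim: dvdE)
    then have "rename_vars \<sigma> p = D2_factor s * rename_vars \<sigma> C"
      using \<sigma>(2) by (simp add: rename_vars_mult rename_vars_D2_factor)
    then show ?thesis using assms(2) \<sigma>(1) by (metis dvdI symmetric_def)
  qed
  then have "D2_roots n dvd p"
    unfolding D2_roots_eq_prod using finite_D2_index by (intro prod_D2_factor_dvd) auto
  then obtain C where "p = D2_roots n * C" by (auto elim: dvdE)
  then have "C * q = 1" using assms(1) D2_roots_nonzero by (simp add: mult_ac)
  then show ?thesis by (metis dvdI mult.commute)
qed

lemma D2_factor_dvd_D2_roots: "t \<in> D2_index n \<Longrightarrow> D2_factor t dvd D2_roots n"
  unfolding D2_roots_eq_prod by (rule dvd_prod_eqI[OF finite_D2_index]) simp_all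

lemma symmetric_factorization_of_D2_roots:
  assumes "p * q = D2_roots n" "symmetric n p" "symmetric n q" "n \<ge> 3"
  shows "p dvd 1 \<or> q dvd 1"
proof -
  have t: "(0, 1, 2) \<in> D2_index n" using assms(4) by (simp add: D2_index_def)
  then have "D2_factor (0, 1, 2) dvd p \<or> D2_factor (0, 1, 2) dvd q"
    using D2_factor_dvd_mult[of 0 2 1 p q] D2_factor_dvd_D2_roots assms(1) by simp
  then show ?thesis
    using symmetric_factor_of_D2_roots[OF assms(1,2) t]
      symmetric_factor_of_D2_roots[of q p, OF _ assms(3) t] assms(1)
    by (auto simp: mult.commute)
qed

subsection \<open>The polynomial \<open>D2\<close>\<close>

lemma mvars_D2_roots: "mvars (D2_roots n) \<subseteq> {0..<n}"
proof -
  have "mvars (D2_factor (i, j, k)) \<subseteq> {0..<n}" if "(i, j, k) \<in> D2_index n" for i j k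
  proof -
    have "keys m \<subseteq> {0..<n}" if "m \<in> keys (D2_factor (i, j, k))" for m
      using keys_D2_factor[of i j k] that \<open>(i, j, k) \<in> D2_index n\<close>
      by (auto simp: D2_index_def split: if_splits)
    then show ?thesis by (simp add: mvars_subset_iff)
  qed
  then have "(\<Union>t\<in>D2_index n. mvars (D2_factor t)) \<subseteq> {0..<n}" by auto
  then show ?thesis unfolding D2_roots_eq_prod using mvars_prod by (rule order.trans[rotated])
qed

lemma D2_vieta: "mvars (D2 n) \<subseteq> {0..<n}" "msubst (D2 n) (vieta n) = D2_roots n"
proof -
  obtain P where P: "mvars P \<subseteq> {0..<n}" "msubst P (vieta n) = D2_roots n"
    using symmetric_imp_vieta_image[OF symmetric_D2_roots mvars_D2_roots] .
  then have "\<exists>!P. mvars P \<subseteq> {0..<n} \<and> msubst P (vieta n) = D2_roots n"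
    by (intro ex1I[of _ P]) (use msubst_vieta_inject[OF _ P(1)] in auto)
  then have "mvars (D2 n) \<subseteq> {0..<n} \<and> msubst (D2 n) (vieta n) = D2_roots n"
    unfolding D2_def by (rule theI')
  then show "mvars (D2 n) \<subseteq> {0..<n}" "msubst (D2 n) (vieta n) = D2_roots n" by blast+
qed

lemma msubst_vieta_dvd_one:
  assumes "mvars q \<subseteq> {0..<n}" "msubst q (vieta n) dvd 1"
  shows "q dvd 1"
proof -
  obtain c where c: "c \<noteq> 0" "msubst q (vieta n) = mconst c"
    using assms(2) mpoly_dvd_one_iff by blast
  have "mvars (mconst c :: rat mpoly) \<subseteq> {0..<n}" by (simp add: mvars_def mconst_def)
  then have "q = mconst c" using c(2) assms(1) msubst_vieta_inject by (metis msubst_mconst)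
  then show ?thesis using c(1) mpoly_dvd_one_iff by blast
qed

theorem proposition2:
  fixes n :: nat
  assumes "n \<ge> 3"
  shows "irreducible (D2 n)"
proof (rule irreducibleI)
  note vars = D2_vieta(1)[of n] and D2 = D2_vieta(2)[of n]
  have t: "(0, 1, 2) \<in> D2_index n" using assms by (simp add: D2_index_def)
  show "D2 n \<noteq> 0" using D2 D2_roots_nonzero by auto
  show "\<not> D2 n dvd 1"
    using msubst_dvd[of "D2 n" 1 "vieta n"] D2 D2_factor_dvd_D2_roots[OF t] D2_factor_not_unit[OF t]
    by (auto dest: dvd_trans)
  fix a b assume ab: "D2 n = a * b"
  with \<open>D2 n \<noteq> 0\<close> have "a \<noteq> 0" "b \<noteq> 0" by auto
  then have "mvars a \<subseteq> {0..<n}" "mvars b \<subseteq> {0..<n}"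
    using mvars_right_factor_subset[of a b n] mvars_right_factor_subset[of b a n] vars ab assms
    by (simp_all add: mult.commute)
  moreover have "msubst a (vieta n) dvd 1 \<or> msubst b (vieta n) dvd 1"
    using D2 ab assms
    by (intro symmetric_factorization_of_D2_roots) (simp_all add: msubst_mult symmetric_msubst_vieta)
  ultimately show "a dvd 1 \<or> b dvd 1" using msubst_vieta_dvd_one by blast
qed

end
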